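(* Let $m=m_n\ge 1$ and let $f=f_n$ be a probability distribution on $\{0,\dots,n\}$ with $(f)_2\lesssim (f)_0$. Let $G_{nmf}$ be the random intersection graph defined in the context. Then, as $n\to\infty$, \[ \mathbb{P}(G_{nmf} \text{ is connected}) \to \begin{cases} 0 & \text{if } \log n - \frac{m}{n}(f)_1 \to +\infty,\\ 1 & \text{if } \log n - \frac{m}{n}(f)_1 \to -\infty.\end{cases} \]
   Context: $G_{nmf}$ is the random graph on node set $\{1,\dots,n\}$ obtained by sampling mutually independent random sets $V_1,\dots,V_m\subset\{1,\dots,n\}$, each with probability mass function $A\mapsto f(|A|)\binom{n}{|A|}^{-1}$, and declaring an unordered pair $\{i,j\}$ of distinct nodes adjacent iff some $V_k$ contains both $i$ and $j$. Moments: $(f)_r=\sum_{x=2}^n x^r f(x)$. $a_n\lesssim b_n$ means $\limsup a_n/|b_n|<\infty$. *)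

theory Defs
  imports "HOL-Analysis.Analysis"
begin

definition moment :: "nat \<Rightarrow> (nat \<Rightarrow> real) \<Rightarrow> nat \<Rightarrow> real" where
  "moment n f r = (\<Sum>x = 2..n. real x ^ r * f x)"

definition is_size_dist :: "nat \<Rightarrow> (nat \<Rightarrow> real) \<Rightarrow> bool" where
  "is_size_dist n f \<longleftrightarrow> (\<forall>x\<in>{0..n}. f x \<ge> 0) \<and> (\<Sum>x = 0..n. f x) = 1"

text \<open>Probability mass of a random set V \<subseteq> {1..n}: A \<mapsto> f(|A|) / binom(n,|A|).\<close>
definition set_prob :: "nat \<Rightarrow> (nat \<Rightarrow> real) \<Rightarrow> nat set \<Rightarrow> real" where
  "set_prob n f A = f (card A) / real (n choose card A)"

definition ig_adj :: "nat \<Rightarrow> (nat \<Rightarrow> nat set) \<Rightarrow> nat \<Rightarrow> nat \<Rightarrow> bool" where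
  "ig_adj m Vs i j \<longleftrightarrow> i \<noteq> j \<and> (\<exists>k<m. i \<in> Vs k \<and> j \<in> Vs k)"

definition ig_connected :: "nat \<Rightarrow> nat \<Rightarrow> (nat \<Rightarrow> nat set) \<Rightarrow> bool" where
  "ig_connected n m Vs \<longleftrightarrow>
     (\<forall>i\<in>{1..n}. \<forall>j\<in>{1..n}. (ig_adj m Vs)\<^sup>*\<^sup>* i j)"

text \<open>P(G_{nmf} is connected), with V_1..V_m independent (indexed 0..m-1).\<close>
definition prob_connected :: "nat \<Rightarrow> nat \<Rightarrow> (nat \<Rightarrow> real) \<Rightarrow> real" where
  "prob_connected n m f =
     (\<Sum>Vs \<in> PiE {..<m} (\<lambda>_. Pow {1..n}).
        (\<Prod>k<m. set_prob n f (Vs k)) * (if ig_connected n m Vs then 1 else 0))"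

end

theory Submission
  imports Defs "HOL-Real_Asymp.Real_Asymp"
begin

text \<open>
  A fixed node is covered by an edge of a single random set with probability \<open>(f)\<^sub>1/n\<close>, so the
  expected number of isolated nodes is \<open>\<mu> = n (1 - (f)\<^sub>1/n)\<^sup>m \<approx> exp (log n - m (f)\<^sub>1/n)\<close>.
  If \<open>log n - m (f)\<^sub>1/n \<rightarrow> \<infinity>\<close> then \<open>\<mu> \<rightarrow> \<infinity>\<close>, and the second moment method shows that
  isolated nodes exist with probability tending to 1; the correlation of two nodes is controlled by
  \<open>(f)\<^sub>2/n\<^sup>2\<close>, and \<open>(f)\<^sub>2 \<lesssim> (f)\<^sub>0 \<le> (f)\<^sub>1/2\<close> makes \<open>m (f)\<^sub>2/n\<^sup>2 = O(log n/n)\<close>.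

  If \<open>log n - m (f)\<^sub>1/n \<rightarrow> -\<infinity>\<close>, note that a disconnected graph has a set \<open>S\<close> of
  \<open>k \<le> n/2\<close> nodes crossed by no \<open>V\<^sub>j\<close>. A union bound over \<open>S\<close>, estimating the probability that
  one \<open>V\<^sub>j\<close> does not cross \<open>S\<close> by \<open>1 - (k/n)(f)\<^sub>1 + (k/n)\<^sup>2((f)\<^sub>0 + (f)\<^sub>2/2)\<close> when
  \<open>k \<le> n/log n\<close> and by \<open>1 - (k/n)(f)\<^sub>0\<close> otherwise, bounds the probability of disconnection by two
  geometric series whose ratios tend to 0.
\<close>

lemma Suc_mult_choose_Suc: "Suc x * (k choose Suc x) = (k - x) * (k choose x)"
  using binomial_absorption[of x k] binomial_absorb_comp[of k x] by simp

lemma choose_mult_power_le: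
  assumes "k \<le> n"
  shows "real (k choose x) * real n ^ x \<le> real (n choose x) * real k ^ x"
proof (induction x)
  case 0
  then show ?case by simp
next
  case (Suc x)
  have step_k: "real (Suc x) * real (k choose Suc x) = real (k - x) * real (k choose x)"
    and step_n: "real (Suc x) * real (n choose Suc x) = real (n - x) * real (n choose x)"
    using Suc_mult_choose_Suc[of x k] Suc_mult_choose_Suc[of x n] by (metis of_nat_mult)+
  have factor: "real (k - x) * real n \<le> real (n - x) * real k"
  proof (cases "x \<le> k")
    case True
    then show ?thesis
      using assms by (auto simp: of_nat_diff algebra_simps intro!: mult_right_mono)
  qed simp
  have "real (Suc x) * (real (k choose Suc x) * real n ^ Suc x)
      = (real (k choose x) * real n ^ x) * (real (k - x) * real n)"
    by (simp only: mult.assoc[symmetric] step_k) (simp add: algebra_simps)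
  also have "\<dots> \<le> (real (n choose x) * real k ^ x) * (real (n - x) * real k)"
    by (rule mult_mono[OF Suc.IH factor]) simp_all
  also have "\<dots> = real (Suc x) * (real (n choose Suc x) * real k ^ Suc x)"
    by (simp only: mult.assoc[symmetric] step_n) (simp add: algebra_simps)
  finally show ?case
    by (simp only: mult_le_cancel_left_pos of_nat_0_less_iff zero_less_Suc)
qed

lemma choose_ratio_le_power:
  assumes "k \<le> n" "x \<le> n"
  shows "real (k choose x) / real (n choose x) \<le> (real k / real n) ^ x"
proof (cases "n = 0")
  case False
  then show ?thesis
    using choose_mult_power_le[OF assms(1), of x] assms
    by (simp add: divide_simps power_divide mult.commute)
qed (use assms in simp)

lemma binomial_le_exp_ratio_power:
  assumes "1 \<le> k"
  shows "real (n choose k) \<le> (exp 1 * real n / real k) ^ k"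
proof -
  have "real k ^ k / fact k \<le> (\<Sum>j. real k ^ j / fact j)"
    using sum_le_suminf[of "\<lambda>j. real k ^ j / fact j" "{k}"] exp_converges[of "real k"]
    by (simp add: sums_iff divide_inverse mult.commute)
  also have "\<dots> = exp (real k)"
    using exp_converges[of "real k"] by (simp add: sums_iff divide_inverse mult.commute)
  finally have pow_le: "real k ^ k \<le> exp (real k) * fact k"
    by (simp add: divide_simps)
  have "real (n choose k) * real k ^ k \<le> real (n choose k) * fact k * exp (real k)"
    using mult_left_mono[OF pow_le, of "real (n choose k)"] by (simp add: ac_simps)
  also have "\<dots> \<le> real n ^ k * exp (real k)"
  proof (rule mult_right_mono)
    show "real (n choose k) * fact k \<le> real n ^ k"
      using binomial_fact_pow[of n k] by (metis of_nat_fact of_nat_le_iff of_nat_mult of_nat_power)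
  qed simp
  finally have "real (n choose k) * real k ^ k \<le> real n ^ k * exp (real k)" .
  then show ?thesis
    using assms
    by (simp add: divide_simps power_mult_distrib power_divide exp_of_nat_mult[symmetric] mult.commute)
qed

lemma one_minus_power_le:
  fixes s :: real
  assumes "0 \<le> s" "s \<le> 1"
  shows "(1 - s) ^ x \<le> 1 - real x * s + (real x)^2 * s^2 / 2"
proof (induction x)
  case 0
  then show ?case by simp
next
  case (Suc x)
  have "(1 - s) ^ Suc x \<le> (1 - s) * (1 - real x * s + (real x)^2 * s^2 / 2)"
    using Suc assms by (simp add: mult_left_mono)
  also have "\<dots> \<le> 1 - real (Suc x) * s + (real (Suc x))^2 * s^2 / 2"
  proof -
    have "0 \<le> (real x)^2 * s^3 / 2 + s^2 / 2"
      using assms by simp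
    then show ?thesis
      by (simp add: algebra_simps power2_eq_square power3_eq_cube)
  qed
  finally show ?case .
qed

lemma power_le_exp_neg:
  fixes p a :: real
  assumes "0 \<le> p" "p \<le> 1 - a"
  shows "p ^ m \<le> exp (- (real m * a))"
proof -
  have "p ^ m \<le> exp (- a) ^ m"
    using assms exp_ge_add_one_self[of "- a"] by (intro power_mono) auto
  then show ?thesis
    by (simp add: exp_of_nat_mult[symmetric])
qed

lemma sum_power_le_twice:
  fixes r :: real
  assumes "0 \<le> r" "r \<le> 1/2"
  shows "(\<Sum>k=1..N. r ^ k) \<le> 2 * r"
proof (cases "N = 0")
  case False
  then have "(1 - r) * (\<Sum>k=1..N. r ^ k) = r - r ^ Suc N"
    using sum_gp_multiplied[of 1 N r] by simp
  also have "\<dots> \<le> (1 - r) * (2 * r)"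
  proof -
    have "0 \<le> r ^ Suc N" "r * (2 * r) \<le> r"
      using assms mult_left_mono[of "2 * r" 1 r] by simp_all
    then show ?thesis
      by (simp add: algebra_simps)
  qed
  finally show ?thesis
    using assms by (simp add: mult_le_cancel_left)
qed (use assms in simp)


section \<open>The product space of set configurations\<close>

definition ig_configs :: "nat \<Rightarrow> nat \<Rightarrow> (nat \<Rightarrow> nat set) set" where
  "ig_configs n m = PiE {..<m} (\<lambda>_. Pow {1..n})"

definition ig_expect :: "nat \<Rightarrow> nat \<Rightarrow> (nat \<Rightarrow> real) \<Rightarrow> ((nat \<Rightarrow> nat set) \<Rightarrow> real) \<Rightarrow> real" where
  "ig_expect n m f h = (\<Sum>Vs\<in>ig_configs n m. (\<Prod>k<m. set_prob n f (Vs k)) * h Vs)"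

definition set_event_prob :: "nat \<Rightarrow> (nat \<Rightarrow> real) \<Rightarrow> (nat set \<Rightarrow> bool) \<Rightarrow> real" where
  "set_event_prob n f E = (\<Sum>A\<in>Pow {1..n}. if E A then set_prob n f A else 0)"

definition subset_count :: "nat \<Rightarrow> (nat set \<Rightarrow> bool) \<Rightarrow> nat \<Rightarrow> nat" where
  "subset_count n E x = card {A. A \<subseteq> {1..n} \<and> card A = x \<and> E A}"

lemma prob_connected_eq_ig_expect:
  "prob_connected n m f = ig_expect n m f (\<lambda>Vs. if ig_connected n m Vs then 1 else 0)"
  unfolding prob_connected_def ig_expect_def ig_configs_def by simp

lemma ig_configs_subset: "Vs \<in> ig_configs n m \<Longrightarrow> k < m \<Longrightarrow> Vs k \<subseteq> {1..n}"
  by (auto simp: ig_configs_def PiE_def Pi_def)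

lemma ig_expect_all_sets:
  "ig_expect n m f (\<lambda>Vs. if \<forall>k<m. E (Vs k) then 1 else 0) = set_event_prob n f E ^ m"
proof -
  have "set_event_prob n f E ^ m = (\<Prod>k<m. \<Sum>A\<in>Pow {1..n}. if E A then set_prob n f A else 0)"
    by (simp add: set_event_prob_def)
  also have "\<dots> = (\<Sum>Vs\<in>ig_configs n m. \<Prod>k<m. if E (Vs k) then set_prob n f (Vs k) else 0)"
    unfolding ig_configs_def by (rule prod_sum_PiE) auto
  also have "\<dots> = ig_expect n m f (\<lambda>Vs. if \<forall>k<m. E (Vs k) then 1 else 0)"
    unfolding ig_expect_def by (intro sum.cong refl) auto
  finally show ?thesis ..
qed

lemma ig_expect_sum: "ig_expect n m f (\<lambda>Vs. \<Sum>i\<in>I. g i Vs) = (\<Sum>i\<in>I. ig_expect n m f (g i))"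
  unfolding ig_expect_def by (simp add: sum_distrib_left sum.swap[of _ I])

lemma ig_expect_add: "ig_expect n m f (\<lambda>Vs. g Vs + h Vs) = ig_expect n m f g + ig_expect n m f h"
  unfolding ig_expect_def by (simp add: distrib_left sum.distrib)

lemma ig_expect_cmult: "ig_expect n m f (\<lambda>Vs. c * g Vs) = c * ig_expect n m f g"
  unfolding ig_expect_def by (simp add: sum_distrib_left algebra_simps)

lemma set_prob_nonneg:
  assumes "is_size_dist n f" "A \<subseteq> {1..n}"
  shows "set_prob n f A \<ge> 0"
proof -
  have "card A \<le> n"
    using card_mono[OF _ assms(2)] by simp
  then show ?thesis
    using assms(1) unfolding is_size_dist_def set_prob_def by auto
qed

lemma ig_expect_mono:
  assumes "is_size_dist n f" "\<And>Vs. Vs \<in> ig_configs n m \<Longrightarrow> h Vs \<le> g Vs"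
  shows "ig_expect n m f h \<le> ig_expect n m f g"
  unfolding ig_expect_def
  using assms set_prob_nonneg[OF assms(1) ig_configs_subset]
  by (intro sum_mono mult_left_mono prod_nonneg) auto

lemma set_event_prob_by_size:
  "set_event_prob n f E = (\<Sum>x=0..n. f x * (real (subset_count n E x) / real (n choose x)))"
proof -
  have "card ` Pow {1..n} \<subseteq> {0..n}"
    using card_mono[of "{1..n}"] by auto
  then have "set_event_prob n f E
      = (\<Sum>x=0..n. \<Sum>A\<in>{A\<in>Pow {1..n}. card A = x}. if E A then set_prob n f A else 0)"
    unfolding set_event_prob_def by (intro sum.group[symmetric]) auto
  also have "\<dots> = (\<Sum>x=0..n. \<Sum>A\<in>{A. A \<subseteq> {1..n} \<and> card A = x \<and> E A}. f x / real (n choose x))"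
    by (intro sum.cong refl sum.mono_neutral_cong_right) (auto simp: set_prob_def)
  finally show ?thesis
    by (simp add: subset_count_def mult.commute)
qed

lemma subset_count_ratio_le_1:
  assumes "x \<le> n"
  shows "real (subset_count n E x) / real (n choose x) \<le> 1"
proof -
  have "subset_count n E x \<le> card {A. A \<subseteq> {1..n} \<and> card A = x}"
    unfolding subset_count_def by (rule card_mono) auto
  then show ?thesis
    using assms n_subsets[of "{1..n}" x] by (simp add: divide_simps)
qed

lemma size_dist_sum_split:
  assumes "is_size_dist n f"
  shows "(\<Sum>x=0..n. f x * (if 2 \<le> x then 1 - a x else 1)) = 1 - (\<Sum>x=2..n. f x * a x)"
proof -
  have "(\<Sum>x=0..n. f x * (if 2 \<le> x then 1 - a x else 1))
     = (\<Sum>x=0..n. f x) - (\<Sum>x=0..n. if 2 \<le> x then f x * a x else 0)"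
    by (simp add: sum_subtractf[symmetric] algebra_simps if_distrib cong: if_cong)
  also have "(\<Sum>x=0..n. if 2 \<le> x then f x * a x else 0) = (\<Sum>x=2..n. f x * a x)"
    by (rule sum.mono_neutral_cong_right) auto
  finally show ?thesis
    using assms by (simp add: is_size_dist_def)
qed

lemma set_event_prob_le_one_minus:
  assumes "is_size_dist n f"
    and "\<And>x. 2 \<le> x \<Longrightarrow> x \<le> n \<Longrightarrow> real (subset_count n E x) / real (n choose x) \<le> 1 - a x"
  shows "set_event_prob n f E \<le> 1 - (\<Sum>x=2..n. f x * a x)"
proof -
  have "set_event_prob n f E \<le> (\<Sum>x=0..n. f x * (if 2 \<le> x then 1 - a x else 1))"
    unfolding set_event_prob_by_size using assms subset_count_ratio_le_1
    by (intro sum_mono mult_left_mono) (auto simp: is_size_dist_def)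
  then show ?thesis
    using size_dist_sum_split[OF assms(1)] by simp
qed

lemma set_event_prob_nonneg: "is_size_dist n f \<Longrightarrow> set_event_prob n f E \<ge> 0"
  unfolding set_event_prob_def using set_prob_nonneg by (intro sum_nonneg) auto

lemma set_event_prob_True: "is_size_dist n f \<Longrightarrow> set_event_prob n f (\<lambda>_. True) = 1"
  unfolding set_event_prob_by_size subset_count_def
  by (simp add: n_subsets[of "{1..n}", simplified] is_size_dist_def)

lemma ig_expect_one: "is_size_dist n f \<Longrightarrow> ig_expect n m f (\<lambda>Vs. 1) = 1"
  using ig_expect_all_sets[of n m f "\<lambda>_. True"] by (simp add: set_event_prob_True)

lemma prob_connected_nonneg: "is_size_dist n f \<Longrightarrow> 0 \<le> prob_connected n m f"
  using ig_expect_mono[of n f m "\<lambda>_. 0"] by (simp add: prob_connected_eq_ig_expect ig_expect_def)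

lemma prob_connected_le_1: "is_size_dist n f \<Longrightarrow> prob_connected n m f \<le> 1"
  using ig_expect_mono[of n f m _ "\<lambda>_. 1"] by (simp add: prob_connected_eq_ig_expect ig_expect_one)


section \<open>Isolated nodes and cuts\<close>

definition covers :: "nat \<Rightarrow> nat set \<Rightarrow> bool" where
  "covers i A \<longleftrightarrow> i \<in> A \<and> 2 \<le> card A"

definition crosses :: "nat set \<Rightarrow> nat set \<Rightarrow> bool" where
  "crosses S A \<longleftrightarrow> A \<inter> S \<noteq> {} \<and> \<not> A \<subseteq> S"

lemma set_event_prob_not_covers:
  assumes dist: "is_size_dist n f" and i: "i \<in> {1..n}"
  shows "set_event_prob n f (\<lambda>A. \<not> covers i A) = 1 - moment n f 1 / real n"
proof -
  have ratio: "real (subset_count n (\<lambda>A. \<not> covers i A) x) / real (n choose x)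
      = (if 2 \<le> x then 1 - real x / real n else 1)" if "x \<le> n" for x
  proof (cases "2 \<le> x")
    case True
    have "{A. A \<subseteq> {1..n} \<and> card A = x \<and> \<not> covers i A} = {A. A \<subseteq> {1..n} - {i} \<and> card A = x}"
      using True by (auto simp: covers_def)
    then have "subset_count n (\<lambda>A. \<not> covers i A) x = (n - 1) choose x"
      unfolding subset_count_def using n_subsets[of "{1..n} - {i}" x] i by simp
    moreover have "real (n - x) * real (n choose x) = real n * real ((n - 1) choose x)"
      using binomial_absorb_comp[of n x] by (metis of_nat_mult)
    ultimately show ?thesis
      using True that i by (simp add: divide_simps of_nat_diff algebra_simps)
  next
    case False
    then have "{A. A \<subseteq> {1..n} \<and> card A = x \<and> \<not> covers i A} = {A. A \<subseteq> {1..n} \<and> card A = x}"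
      by (auto simp: covers_def)
    then show ?thesis
      unfolding subset_count_def using False that n_subsets[of "{1..n}" x] by simp
  qed
  have "set_event_prob n f (\<lambda>A. \<not> covers i A)
      = (\<Sum>x=0..n. f x * (if 2 \<le> x then 1 - real x / real n else 1))"
    unfolding set_event_prob_by_size by (intro sum.cong) (auto simp: ratio)
  also have "\<dots> = 1 - moment n f 1 / real n"
    unfolding size_dist_sum_split[OF dist] moment_def by (simp add: sum_divide_distrib algebra_simps)
  finally show ?thesis .
qed

lemma set_event_prob_not_covers_pair_le:
  assumes dist: "is_size_dist n f" and "i \<in> {1..n}" "j \<in> {1..n}" "i \<noteq> j"
  shows "set_event_prob n f (\<lambda>A. \<not> covers i A \<and> \<not> covers j A)
           \<le> 1 - 2 * moment n f 1 / real n + 2 * moment n f 2 / (real n)^2"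
proof -
  have n2: "2 \<le> n"
    using assms by auto
  have "real (subset_count n (\<lambda>A. \<not> covers i A \<and> \<not> covers j A) x) / real (n choose x)
      \<le> 1 - (2 * real x / real n - 2 * (real x)^2 / (real n)^2)" if x: "2 \<le> x" "x \<le> n" for x
  proof -
    have "subset_count n (\<lambda>A. \<not> covers i A \<and> \<not> covers j A) x
        \<le> card {A. A \<subseteq> {1..n} - {i,j} \<and> card A = x}"
      unfolding subset_count_def using x by (intro card_mono) (auto simp: covers_def)
    also have "\<dots> = (n - 2) choose x"
      using n_subsets[of "{1..n} - {i,j}" x] assms by (simp add: card_Diff_subset numeral_2_eq_2)
    finally have "real (subset_count n (\<lambda>A. \<not> covers i A \<and> \<not> covers j A) x) / real (n choose x)
        \<le> real ((n - 2) choose x) / real (n choose x)"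
      by (simp add: divide_right_mono)
    also have "\<dots> \<le> (1 - 2 / real n) ^ x"
      using choose_ratio_le_power[of "n - 2" n x] x n2 by (simp add: of_nat_diff diff_divide_distrib)
    also have "\<dots> \<le> 1 - real x * (2 / real n) + (real x)^2 * (2 / real n)^2 / 2"
      using n2 by (intro one_minus_power_le) auto
    finally show ?thesis
      by (simp add: power2_eq_square field_simps)
  qed
  then have "set_event_prob n f (\<lambda>A. \<not> covers i A \<and> \<not> covers j A)
      \<le> 1 - (\<Sum>x=2..n. f x * (2 * real x / real n - 2 * (real x)^2 / (real n)^2))"
    by (rule set_event_prob_le_one_minus[OF dist])
  also have "(\<Sum>x=2..n. f x * (2 * real x / real n - 2 * (real x)^2 / (real n)^2))
      = 2 * moment n f 1 / real n - 2 * moment n f 2 / (real n)^2"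
    unfolding moment_def
    by (simp add: sum_subtractf sum_divide_distrib sum_distrib_left algebra_simps)
  finally show ?thesis
    by simp
qed

text \<open>A set of size \<open>x\<close> avoids crossing \<open>S\<close> only by lying inside \<open>S\<close> or inside its complement.\<close>
lemma subset_count_not_crosses_ratio_le:
  assumes S: "S \<subseteq> {1..n}" "card S = k" and x: "x \<le> n"
  shows "real (subset_count n (\<lambda>A. \<not> crosses S A) x) / real (n choose x)
           \<le> (real k / real n) ^ x + (1 - real k / real n) ^ x"
proof -
  have fin: "finite S"
    using S finite_subset by blast
  have kn: "k \<le> n"
    using S card_mono[OF _ S(1)] by fastforce
  have "subset_count n (\<lambda>A. \<not> crosses S A) x
      \<le> card ({A. A \<subseteq> S \<and> card A = x} \<union> {A. A \<subseteq> {1..n} - S \<and> card A = x})"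
    unfolding subset_count_def using fin
    by (intro card_mono) (auto simp: crosses_def)
  also have "\<dots> \<le> card {A. A \<subseteq> S \<and> card A = x} + card {A. A \<subseteq> {1..n} - S \<and> card A = x}"
    by (rule card_Un_le)
  also have "\<dots> = (k choose x) + ((n - k) choose x)"
    using n_subsets[of S x] n_subsets[of "{1..n} - S" x] S fin by (simp add: card_Diff_subset)
  finally have "real (subset_count n (\<lambda>A. \<not> crosses S A) x) / real (n choose x)
      \<le> real (k choose x) / real (n choose x) + real ((n - k) choose x) / real (n choose x)"
    by (simp add: divide_right_mono flip: add_divide_distrib)
  also have "\<dots> \<le> (real k / real n) ^ x + (real (n - k) / real n) ^ x"
    using choose_ratio_le_power[of k n x] choose_ratio_le_power[of "n - k" n x] kn x
    by (intro add_mono) auto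
  finally show ?thesis
    using kn x by (cases "n = 0") (simp_all add: of_nat_diff diff_divide_distrib)
qed

lemma set_event_prob_not_crosses_le_linear:
  assumes dist: "is_size_dist n f" and S: "S \<subseteq> {1..n}" "card S = k" and "2 * k \<le> n"
  shows "set_event_prob n f (\<lambda>A. \<not> crosses S A) \<le> 1 - real k / real n * moment n f 0"
proof -
  define t where "t = real k / real n"
  have t: "0 \<le> t" "t \<le> 1/2"
    using assms by (auto simp: t_def divide_simps)
  have "real (subset_count n (\<lambda>A. \<not> crosses S A) x) / real (n choose x) \<le> 1 - t"
    if x: "2 \<le> x" "x \<le> n" for x
  proof -
    have "real (subset_count n (\<lambda>A. \<not> crosses S A) x) / real (n choose x) \<le> t ^ x + (1 - t) ^ x"
      using subset_count_not_crosses_ratio_le[OF S x(2)] by (simp add: t_def)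
    also have "\<dots> \<le> t ^ 2 + (1 - t) ^ 2"
      using t x by (intro add_mono power_decreasing) auto
    also have "\<dots> \<le> 1 - t"
      using mult_left_mono[of "2 * t" 1 t] t by (simp add: power2_eq_square algebra_simps)
    finally show ?thesis .
  qed
  then have "set_event_prob n f (\<lambda>A. \<not> crosses S A) \<le> 1 - (\<Sum>x=2..n. f x * t)"
    by (rule set_event_prob_le_one_minus[OF dist])
  then show ?thesis
    unfolding moment_def by (simp add: t_def sum_distrib_left algebra_simps)
qed

lemma set_event_prob_not_crosses_le_quadratic:
  assumes dist: "is_size_dist n f" and S: "S \<subseteq> {1..n}" "card S = k"
  shows "set_event_prob n f (\<lambda>A. \<not> crosses S A) \<le> 1 - real k / real n * moment n f 1
           + (real k / real n)^2 * (moment n f 0 + moment n f 2 / 2)"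
proof -
  define t where "t = real k / real n"
  have t: "0 \<le> t" "t \<le> 1"
    using S card_mono[OF _ S(1)] by (auto simp: t_def divide_simps)
  have "real (subset_count n (\<lambda>A. \<not> crosses S A) x) / real (n choose x)
      \<le> 1 - (real x * t - (real x)^2 * t^2 / 2 - t^2)" if x: "2 \<le> x" "x \<le> n" for x
  proof -
    have "real (subset_count n (\<lambda>A. \<not> crosses S A) x) / real (n choose x) \<le> t ^ x + (1 - t) ^ x"
      using subset_count_not_crosses_ratio_le[OF S x(2)] by (simp add: t_def)
    also have "\<dots> \<le> t ^ 2 + (1 - real x * t + (real x)^2 * t^2 / 2)"
      using t x by (intro add_mono power_decreasing one_minus_power_le) auto
    finally show ?thesis
      by simp
  qed
  then have "set_event_prob n f (\<lambda>A. \<not> crosses S A)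
      \<le> 1 - (\<Sum>x=2..n. f x * (real x * t - (real x)^2 * t^2 / 2 - t^2))"
    by (rule set_event_prob_le_one_minus[OF dist])
  also have "(\<Sum>x=2..n. f x * (real x * t - (real x)^2 * t^2 / 2 - t^2))
      = t * moment n f 1 - t^2 * (moment n f 0 + moment n f 2 / 2)"
    unfolding moment_def
    by (simp add: sum_subtractf sum_distrib_left sum_divide_distrib sum.distrib algebra_simps)
  finally show ?thesis
    by (simp add: t_def algebra_simps)
qed

lemma ig_connected_imp_covers:
  assumes "ig_connected n m Vs" "2 \<le> n" "i \<in> {1..n}"
    and sub: "\<And>k. k < m \<Longrightarrow> Vs k \<subseteq> {1..n}"
  shows "\<exists>k<m. covers i (Vs k)"
proof -
  obtain j where j: "j \<in> {1..n}" "j \<noteq> i"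
    using assms(2) by (cases "i = 1") (auto intro: that[of 1] that[of 2])
  have "(ig_adj m Vs)\<^sup>*\<^sup>* i j"
    using assms j unfolding ig_connected_def by blast
  then obtain y where "ig_adj m Vs i y"
    using j(2) by (metis converse_rtranclpE)
  then obtain k where k: "k < m" "i \<noteq> y" "i \<in> Vs k" "y \<in> Vs k"
    unfolding ig_adj_def by auto
  then have "card {i, y} \<le> card (Vs k)"
    using sub[OF k(1)] by (intro card_mono) (auto intro: finite_subset)
  then show ?thesis
    using k by (auto simp: covers_def)
qed

definition half_cuts :: "nat \<Rightarrow> nat set set" where
  "half_cuts n = {S. S \<subseteq> {1..n} \<and> S \<noteq> {} \<and> 2 * card S \<le> n}"

lemma sum_half_cuts_by_card:
  "(\<Sum>S\<in>half_cuts n. g (card S)) = (\<Sum>k=1..n div 2. real (n choose k) * g k)"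
proof -
  have "card ` half_cuts n \<subseteq> {1..n div 2}"
  proof (rule image_subsetI)
    fix S assume "S \<in> half_cuts n"
    then have "0 < card S" "2 * card S \<le> n"
      using finite_subset[of S "{1..n}"] by (auto simp: half_cuts_def card_gt_0_iff)
    then show "card S \<in> {1..n div 2}"
      by simp
  qed
  moreover have "finite (half_cuts n)"
    unfolding half_cuts_def by (rule finite_subset[of _ "Pow {1..n}"]) auto
  ultimately have "(\<Sum>S\<in>half_cuts n. g (card S))
      = (\<Sum>k=1..n div 2. \<Sum>S\<in>{S\<in>half_cuts n. card S = k}. g (card S))"
    by (intro sum.group[symmetric]) simp_all
  also have "\<dots> = (\<Sum>k=1..n div 2. real (n choose k) * g k)"
  proof (intro sum.cong refl)
    fix k assume k: "k \<in> {1..n div 2}"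
    have "{S\<in>half_cuts n. card S = k} = {S. S \<subseteq> {1..n} \<and> card S = k}"
    proof safe
      fix S assume "S \<subseteq> {1..n}" "k = card S"
      with k show "S \<in> half_cuts n"
        unfolding half_cuts_def by auto
    qed (auto simp: half_cuts_def)
    then show "(\<Sum>S\<in>{S\<in>half_cuts n. card S = k}. g (card S)) = real (n choose k) * g k"
      using n_subsets[of "{1..n}" k] by simp
  qed
  finally show ?thesis .
qed

text \<open>The component \<open>R\<close> of a node, or its complement, is a cut of at most half the nodes.\<close>
lemma not_ig_connected_imp_cut:
  assumes "\<not> ig_connected n m Vs" and sub: "\<And>k. k < m \<Longrightarrow> Vs k \<subseteq> {1..n}"
  obtains S where "S \<in> half_cuts n" "\<And>k. k < m \<Longrightarrow> \<not> crosses S (Vs k)"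
proof -
  obtain i j where ij: "i \<in> {1..n}" "j \<in> {1..n}" "\<not> (ig_adj m Vs)\<^sup>*\<^sup>* i j"
    using assms(1) unfolding ig_connected_def by blast
  define R where "R = {y \<in> {1..n}. (ig_adj m Vs)\<^sup>*\<^sup>* i y}"
  have R: "R \<subseteq> {1..n}" "i \<in> R" "j \<notin> R"
    using ij by (auto simp: R_def)
  have uncrossed: "\<not> crosses R (Vs k)" if k: "k < m" for k
  proof
    assume "crosses R (Vs k)"
    then obtain a b where ab: "a \<in> Vs k" "a \<in> R" "b \<in> Vs k" "b \<notin> R"
      unfolding crosses_def by blast
    then have "ig_adj m Vs a b"
      using k unfolding ig_adj_def by blast
    then have "(ig_adj m Vs)\<^sup>*\<^sup>* i b"
      using ab by (auto simp: R_def intro: rtranclp.rtrancl_into_rtrancl)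
    then show False
      using ab sub[OF k] by (auto simp: R_def)
  qed
  show ?thesis
  proof (cases "2 * card R \<le> n")
    case True
    then have "R \<in> half_cuts n"
      using R by (auto simp: half_cuts_def)
    then show ?thesis
      using that uncrossed by blast
  next
    case False
    show ?thesis
    proof (rule that[of "{1..n} - R"])
      have "2 * card ({1..n} - R) \<le> n"
        using False R by (simp add: card_Diff_subset finite_subset)
      moreover have "{1..n} - R \<noteq> {}"
        using R ij by blast
      ultimately show "{1..n} - R \<in> half_cuts n"
        by (auto simp: half_cuts_def)
      show "\<not> crosses ({1..n} - R) (Vs k)" if "k < m" for k
        using uncrossed[OF that] sub[OF that] by (auto simp: crosses_def)
    qed
  qed
qed


section \<open>Second moment bound and union bound\<close>

definition isolated :: "nat \<Rightarrow> nat \<Rightarrow> (nat \<Rightarrow> nat set) \<Rightarrow> real" where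
  "isolated m i Vs = (if \<forall>k<m. \<not> covers i (Vs k) then 1 else 0)"

lemma ig_expect_isolated:
  assumes "is_size_dist n f" "i \<in> {1..n}"
  shows "ig_expect n m f (isolated m i) = (1 - moment n f 1 / real n) ^ m"
  using ig_expect_all_sets[of n m f "\<lambda>A. \<not> covers i A"]
  unfolding isolated_def set_event_prob_not_covers[OF assms] .

lemma ig_expect_isolated_pair_le:
  assumes dist: "is_size_dist n f" and "i \<in> {1..n}" "j \<in> {1..n}" "i \<noteq> j"
  shows "ig_expect n m f (\<lambda>Vs. isolated m i Vs * isolated m j Vs)
           \<le> (1 - 2 * moment n f 1 / real n + 2 * moment n f 2 / (real n)^2) ^ m"
proof -
  have "ig_expect n m f (\<lambda>Vs. isolated m i Vs * isolated m j Vs)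
      = ig_expect n m f (\<lambda>Vs. if \<forall>k<m. \<not> covers i (Vs k) \<and> \<not> covers j (Vs k) then 1 else 0)"
    unfolding isolated_def by (rule arg_cong[where f = "ig_expect n m f"]) auto
  also have "\<dots> = set_event_prob n f (\<lambda>A. \<not> covers i A \<and> \<not> covers j A) ^ m"
    by (rule ig_expect_all_sets)
  also have "\<dots> \<le> (1 - 2 * moment n f 1 / real n + 2 * moment n f 2 / (real n)^2) ^ m"
    using set_event_prob_not_covers_pair_le[OF assms] set_event_prob_nonneg[OF dist]
    by (intro power_mono) auto
  finally show ?thesis .
qed

text \<open>The second moment method, in the form
  \<open>P(connected) \<le> P(X = 0) \<le> E((X/\<mu> - 1)\<^sup>2) = E(X\<^sup>2)/\<mu>\<^sup>2 - 1\<close>.\<close>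
lemma prob_connected_le_second_moment:
  assumes dist: "is_size_dist n f" and "0 < \<mu>" "ig_expect n m f X = \<mu>"
    and vanish: "\<And>Vs. Vs \<in> ig_configs n m \<Longrightarrow> ig_connected n m Vs \<Longrightarrow> X Vs = 0"
  shows "prob_connected n m f \<le> ig_expect n m f (\<lambda>Vs. (X Vs)^2) / \<mu>^2 - 1"
proof -
  have "(if ig_connected n m Vs then 1 else 0) \<le> (1 / \<mu>^2) * (X Vs)^2 + ((-2 / \<mu>) * X Vs + 1)"
    if "Vs \<in> ig_configs n m" for Vs
  proof -
    have "(if ig_connected n m Vs then 1 else 0) \<le> (X Vs / \<mu> - 1)^2"
      using vanish[OF that] by simp
    also have "\<dots> = (1 / \<mu>^2) * (X Vs)^2 + ((-2 / \<mu>) * X Vs + 1)"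
      using \<open>0 < \<mu>\<close> by (simp add: power2_eq_square field_simps)
    finally show ?thesis .
  qed
  then have "prob_connected n m f
      \<le> ig_expect n m f (\<lambda>Vs. (1 / \<mu>^2) * (X Vs)^2 + ((-2 / \<mu>) * X Vs + 1))"
    unfolding prob_connected_eq_ig_expect by (rule ig_expect_mono[OF dist])
  also have "\<dots> = (1 / \<mu>^2) * ig_expect n m f (\<lambda>Vs. (X Vs)^2) + ((-2 / \<mu>) * ig_expect n m f X + 1)"
    by (simp only: ig_expect_add ig_expect_cmult ig_expect_one[OF dist])
  also have "\<dots> = ig_expect n m f (\<lambda>Vs. (X Vs)^2) / \<mu>^2 - 1"
    using assms(2,3) by simp
  finally show ?thesis .
qed

lemma ig_expect_isolated_count_sq_le:
  fixes n m :: nat and f :: "nat \<Rightarrow> real"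
  defines "q \<equiv> 1 - moment n f 1 / real n"
    and "B \<equiv> 1 - 2 * moment n f 1 / real n + 2 * moment n f 2 / (real n)^2"
  assumes dist: "is_size_dist n f" and n2: "2 \<le> n"
  shows "ig_expect n m f (\<lambda>Vs. (\<Sum>i\<in>{1..n}. isolated m i Vs)^2) \<le> real n * q ^ m + (real n)^2 * B ^ m"
proof -
  have "0 \<le> B"
    using set_event_prob_not_covers_pair_le[OF dist, of 1 2] n2
      set_event_prob_nonneg[OF dist, of "\<lambda>A. \<not> covers 1 A \<and> \<not> covers 2 A"]
    unfolding B_def by fastforce
  then have pair: "ig_expect n m f (\<lambda>Vs. isolated m i Vs * isolated m j Vs)
      \<le> (if j = i then q ^ m else 0) + B ^ m" if "i \<in> {1..n}" "j \<in> {1..n}" for i j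
  proof (cases "j = i")
    case True
    then have "(\<lambda>Vs. isolated m i Vs * isolated m j Vs) = isolated m i"
      by (auto simp: isolated_def)
    then show ?thesis
      using True ig_expect_isolated[OF dist that(1)] \<open>0 \<le> B\<close> by (simp add: q_def)
  qed (use ig_expect_isolated_pair_le[OF dist that] in \<open>simp add: B_def\<close>)
  have "ig_expect n m f (\<lambda>Vs. (\<Sum>i\<in>{1..n}. isolated m i Vs)^2)
      = (\<Sum>i\<in>{1..n}. \<Sum>j\<in>{1..n}. ig_expect n m f (\<lambda>Vs. isolated m i Vs * isolated m j Vs))"
    unfolding power2_eq_square sum_product by (simp add: ig_expect_sum)
  also have "\<dots> \<le> (\<Sum>i\<in>{1..n}. \<Sum>j\<in>{1..n}. (if j = i then q ^ m else 0) + B ^ m)"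
    by (intro sum_mono pair) auto
  also have "\<dots> = real n * q ^ m + (real n)^2 * B ^ m"
    by (simp add: sum.distrib power2_eq_square algebra_simps)
  finally show ?thesis .
qed

lemma prob_connected_le_isolated_bound:
  fixes n m :: nat and f :: "nat \<Rightarrow> real"
  defines "q \<equiv> 1 - moment n f 1 / real n"
    and "B \<equiv> 1 - 2 * moment n f 1 / real n + 2 * moment n f 2 / (real n)^2"
  assumes dist: "is_size_dist n f" and n2: "2 \<le> n" and qpos: "0 < q"
  shows "prob_connected n m f \<le> 1 / (real n * q ^ m) + B ^ m / q ^ (2 * m) - 1"
proof -
  define X where "X Vs = (\<Sum>i\<in>{1..n}. isolated m i Vs)" for Vs
  define \<mu> where "\<mu> = real n * q ^ m"
  have \<mu>: "0 < \<mu>"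
    using qpos n2 by (simp add: \<mu>_def)
  have expect_X: "ig_expect n m f X = \<mu>"
    unfolding X_def ig_expect_sum by (simp add: ig_expect_isolated[OF dist] q_def \<mu>_def)
  have vanish: "X Vs = 0" if "Vs \<in> ig_configs n m" "ig_connected n m Vs" for Vs
    using ig_connected_imp_covers[OF that(2) n2 _ ig_configs_subset[OF that(1)]]
    by (auto simp: X_def isolated_def intro!: sum.neutral)
  have "prob_connected n m f \<le> ig_expect n m f (\<lambda>Vs. (X Vs)^2) / \<mu>^2 - 1"
    by (rule prob_connected_le_second_moment[OF dist \<mu> expect_X vanish])
  also have "\<dots> \<le> (\<mu> + (real n)^2 * B ^ m) / \<mu>^2 - 1"
    using ig_expect_isolated_count_sq_le[OF dist n2, of m]
    by (simp add: divide_right_mono X_def \<mu>_def q_def B_def)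
  also have "\<dots> = 1 / (real n * q ^ m) + B ^ m / q ^ (2 * m) - 1"
    using \<mu> qpos n2 by (simp add: \<mu>_def field_simps power_mult_distrib power_mult power2_eq_square)
  finally show ?thesis .
qed

lemma one_minus_prob_connected_le_sum_half_cuts:
  assumes dist: "is_size_dist n f"
  shows "1 - prob_connected n m f \<le> (\<Sum>S\<in>half_cuts n. set_event_prob n f (\<lambda>A. \<not> crosses S A) ^ m)"
proof -
  define uncut where "uncut S Vs = (if \<forall>k<m. \<not> crosses S (Vs k) then 1 else (0::real))" for S Vs
  have uncut_nonneg: "0 \<le> uncut S Vs" for S Vs
    by (simp add: uncut_def)
  have fin: "finite (half_cuts n)"
    unfolding half_cuts_def by (rule finite_subset[of _ "Pow {1..n}"]) auto
  have pointwise: "1 + (-1) * (if ig_connected n m Vs then 1 else 0) \<le> (\<Sum>S\<in>half_cuts n. uncut S Vs)"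
    if Vs: "Vs \<in> ig_configs n m" for Vs
  proof (cases "ig_connected n m Vs")
    case True
    then show ?thesis
      using sum_nonneg[of "half_cuts n" "\<lambda>S. uncut S Vs"] uncut_nonneg by simp
  next
    case False
    obtain S where "S \<in> half_cuts n" and uncrossed: "\<And>k. k < m \<Longrightarrow> \<not> crosses S (Vs k)"
      using not_ig_connected_imp_cut[OF False ig_configs_subset[OF Vs]] by blast
    then have "uncut S Vs \<le> (\<Sum>S\<in>half_cuts n. uncut S Vs)"
      by (intro member_le_sum[OF _ uncut_nonneg fin])
    moreover have "uncut S Vs = 1"
      using uncrossed by (simp add: uncut_def)
    ultimately show ?thesis
      using False by simp
  qed
  have "1 - prob_connected n m f
      = ig_expect n m f (\<lambda>Vs. 1 + (-1) * (if ig_connected n m Vs then 1 else 0))"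
    by (simp only: ig_expect_add ig_expect_cmult ig_expect_one[OF dist] prob_connected_eq_ig_expect)
  also have "\<dots> \<le> ig_expect n m f (\<lambda>Vs. \<Sum>S\<in>half_cuts n. uncut S Vs)"
    by (rule ig_expect_mono[OF dist pointwise])
  also have "\<dots> = (\<Sum>S\<in>half_cuts n. set_event_prob n f (\<lambda>A. \<not> crosses S A) ^ m)"
    unfolding ig_expect_sum uncut_def by (intro sum.cong refl ig_expect_all_sets)
  finally show ?thesis .
qed

lemma one_minus_prob_connected_le_cut_sum:
  assumes dist: "is_size_dist n f"
    and bound: "\<And>S. S \<subseteq> {1..n} \<Longrightarrow> card S \<in> {1..n div 2} \<Longrightarrow>
                  set_event_prob n f (\<lambda>A. \<not> crosses S A) ^ m \<le> b (card S)"
  shows "1 - prob_connected n m f \<le> (\<Sum>k=1..n div 2. real (n choose k) * b k)"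
proof -
  have "(\<Sum>S\<in>half_cuts n. set_event_prob n f (\<lambda>A. \<not> crosses S A) ^ m)
      \<le> (\<Sum>S\<in>half_cuts n. b (card S))"
  proof (rule sum_mono)
    fix S assume "S \<in> half_cuts n"
    then have "S \<subseteq> {1..n}" "card S \<in> {1..n div 2}"
      using finite_subset[of S "{1..n}"] by (auto simp: half_cuts_def card_gt_0_iff Suc_le_eq)
    then show "set_event_prob n f (\<lambda>A. \<not> crosses S A) ^ m \<le> b (card S)"
      by (rule bound)
  qed
  then show ?thesis
    using one_minus_prob_connected_le_sum_half_cuts[OF dist, of m] sum_half_cuts_by_card[of b n]
    by linarith
qed

lemma one_minus_prob_connected_le_cut_bound:
  assumes dist: "is_size_dist n f"
  shows "1 - prob_connected n m f \<le> (\<Sum>k=1..n div 2. real (n choose k) *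
     min (exp (- (real m * (real k / real n * moment n f 1
                  - (real k / real n)^2 * (moment n f 0 + moment n f 2 / 2)))))
         (exp (- (real m * (real k / real n * moment n f 0)))))"
proof (rule one_minus_prob_connected_le_cut_sum[OF dist])
  fix S assume S: "S \<subseteq> {1..n}" "card S \<in> {1..n div 2}"
  let ?p = "set_event_prob n f (\<lambda>A. \<not> crosses S A)"
  have p: "0 \<le> ?p"
    by (rule set_event_prob_nonneg[OF dist])
  have "?p ^ m \<le> exp (- (real m * (real (card S) / real n * moment n f 1
      - (real (card S) / real n)^2 * (moment n f 0 + moment n f 2 / 2))))"
    using set_event_prob_not_crosses_le_quadratic[OF dist S(1) refl]
    by (intro power_le_exp_neg[OF p]) simp
  moreover have "?p ^ m \<le> exp (- (real m * (real (card S) / real n * moment n f 0)))"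
    using set_event_prob_not_crosses_le_linear[OF dist S(1) refl] S(2)
    by (intro power_le_exp_neg[OF p]) auto
  ultimately show "?p ^ m \<le> min (exp (- (real m * (real (card S) / real n * moment n f 1
      - (real (card S) / real n)^2 * (moment n f 0 + moment n f 2 / 2)))))
      (exp (- (real m * (real (card S) / real n * moment n f 0))))"
    by simp
qed


lemma moment_nonneg: "is_size_dist n f \<Longrightarrow> 0 \<le> moment n f r"
  unfolding moment_def is_size_dist_def by (intro sum_nonneg) auto

lemma moment_0_le_1:
  assumes "is_size_dist n f"
  shows "moment n f 0 \<le> 1"
proof -
  have "moment n f 0 = (\<Sum>x=2..n. f x)"
    by (simp add: moment_def)
  also have "\<dots> \<le> (\<Sum>x=0..n. f x)"
    using assms unfolding is_size_dist_def by (intro sum_mono2) auto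
  finally have "moment n f 0 \<le> (\<Sum>x=0..n. f x)" .
  then show ?thesis
    using assms by (simp add: is_size_dist_def)
qed

text \<open>Sets of size 0 or 1 are ignored by the moments, so \<open>x \<ge> 2\<close> in every summand.\<close>
lemma moment_le_half_moment_Suc:
  assumes "is_size_dist n f"
  shows "moment n f r \<le> moment n f (Suc r) / 2"
  unfolding moment_def sum_divide_distrib
proof (rule sum_mono)
  fix x assume x: "x \<in> {2..n}"
  have "0 \<le> real x ^ r * f x"
    using x assms by (simp add: is_size_dist_def)
  then have "real x ^ r * f x * 2 \<le> real x ^ r * f x * real x"
    using x by (intro mult_left_mono) auto
  then show "real x ^ r * f x \<le> real x ^ Suc r * f x / 2"
    by (simp add: algebra_simps)
qed

lemma moment_ratio_bounds:
  assumes dist: "is_size_dist n f" and K: "0 \<le> K" and mk: "moment n f 2 \<le> K * moment n f 0"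
  shows "2 * moment n f 1 \<le> K * moment n f 0" "2 * moment n f 2 \<le> K * moment n f 1"
proof -
  have M: "moment n f 0 \<le> moment n f 1 / 2" "moment n f 1 \<le> moment n f 2 / 2"
    using moment_le_half_moment_Suc[OF dist, of 0] moment_le_half_moment_Suc[OF dist, of 1]
    by (simp_all add: numeral_2_eq_2)
  have "K * moment n f 0 \<le> K * (moment n f 1 / 2)"
    using M(1) K by (rule mult_left_mono)
  then show "2 * moment n f 1 \<le> K * moment n f 0" "2 * moment n f 2 \<le> K * moment n f 1"
    using M mk by linarith+
qed

lemma inverse_expected_isolated_le:
  fixes y K :: real
  assumes y: "0 \<le> y" "y \<le> 1/4" "y \<le> K / (2 * real n)" and "0 < n"
    and my: "real m * y \<le> ln (real n)"
  shows "1 / (real n * (1 - y) ^ m) \<le> exp (- (ln (real n) - real m * y) + K * ln (real n) / real n)"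
proof -
  have "0 \<le> real m * y"
    using y by simp
  then have ln_n: "0 \<le> ln (real n)"
    using my by linarith
  have "real m * (2 * y^2) = 2 * (real m * y) * y"
    by (simp add: power2_eq_square algebra_simps)
  also have "\<dots> \<le> 2 * ln (real n) * (K / (2 * real n))"
    using y my ln_n by (intro mult_mono) auto
  also have "\<dots> = K * ln (real n) / real n"
    by (simp add: field_simps)
  finally have "real m * (2 * y^2) \<le> K * ln (real n) / real n" .
  moreover have "real m * (- y - 2 * y^2) \<le> real m * ln (1 - y)"
    using y ln_one_minus_pos_lower_bound[of y] by (intro mult_left_mono) auto
  ultimately have "exp (ln (real n) - real m * y - K * ln (real n) / real n)
      \<le> exp (ln (real n) + real m * ln (1 - y))"
    by (simp add: algebra_simps)
  also have "\<dots> = real n * (1 - y) ^ m"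
    using y \<open>0 < n\<close> by (simp add: exp_add exp_of_nat_mult)
  moreover have "0 < real n * (1 - y) ^ m"
    using y \<open>0 < n\<close> by simp
  ultimately have "1 / (real n * (1 - y) ^ m) \<le> 1 / exp (ln (real n) - real m * y - K * ln (real n) / real n)"
    by (intro divide_left_mono) auto
  also have "\<dots> = exp (- (ln (real n) - real m * y) + K * ln (real n) / real n)"
    by (simp add: divide_simps algebra_simps flip: exp_add)
  finally show ?thesis .
qed

lemma pair_ratio_le_exp:
  fixes y c :: real
  assumes y: "0 \<le> y" "y \<le> 1/4" and "0 \<le> c"
  shows "(1 - 2 * y + c) ^ m / (1 - y) ^ (2 * m) \<le> exp (2 * real m * c)"
proof -
  have "(3/4)^2 \<le> (1 - y)^2"
    using y by (intro power_mono) auto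
  then have "c \<le> (1 - y)^2 * (2 * c)"
    using mult_right_mono[of "1/2" "(1 - y)^2" "2 * c"] \<open>0 \<le> c\<close> by (simp add: power2_eq_square)
  moreover have "0 \<le> y * y"
    by simp
  ultimately have "1 - 2 * y + c \<le> (1 - y)^2 * (1 + 2 * c)"
    unfolding power2_eq_square by (simp add: algebra_simps del: zero_le_square)
  moreover have "0 < (1 - y)^2"
    using y by simp
  ultimately have "(1 - 2 * y + c) / (1 - y)^2 \<le> 1 + 2 * c"
    by (simp add: pos_divide_le_eq mult.commute)
  also have "\<dots> \<le> exp (2 * c)"
    using exp_ge_add_one_self[of "2 * c"] by simp
  finally have "((1 - 2 * y + c) / (1 - y)^2) ^ m \<le> exp (2 * c) ^ m"
    using y \<open>0 \<le> c\<close> by (intro power_mono) auto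
  moreover have "(1 - 2 * y + c) ^ m / (1 - y) ^ (2 * m) = ((1 - 2 * y + c) / (1 - y)^2) ^ m"
    by (simp add: power_divide power_mult)
  ultimately show ?thesis
    by (simp add: exp_of_nat_mult[symmetric] ac_simps)
qed

lemma prob_connected_le_exp:
  assumes dist: "is_size_dist n f" and n2: "2 \<le> n" and K: "0 \<le> K" "2 * K \<le> real n"
    and mk: "moment n f 2 \<le> K * moment n f 0"
    and Lm: "real m / real n * moment n f 1 \<le> ln (real n)"
  shows "prob_connected n m f \<le> exp (- (ln (real n) - real m / real n * moment n f 1)
           + K * ln (real n) / real n) + exp (2 * K * ln (real n) / real n) - 1"
proof -
  define M0 M1 M2 where "M0 = moment n f 0" "M1 = moment n f 1" "M2 = moment n f 2"
  define y where "y = M1 / real n"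
  have npos: "0 < real n"
    using n2 by simp
  have M: "0 \<le> M0" "0 \<le> M1" "0 \<le> M2" "M0 \<le> 1" "2 * M1 \<le> K * M0" "2 * M2 \<le> K * M1"
    using moment_nonneg[OF dist] moment_0_le_1[OF dist] moment_ratio_bounds[OF dist K(1) mk]
    by (simp_all add: M0_M1_M2_def)
  have "K * M0 \<le> K"
    using M K mult_left_mono[of M0 1 K] by simp
  then have yK: "y \<le> K / (2 * real n)"
    using M npos by (simp add: y_def divide_simps)
  also have "\<dots> \<le> 1/4"
    using K npos by (simp add: divide_simps)
  finally have y: "0 \<le> y" "y \<le> 1/4"
    using M npos by (simp_all add: y_def)
  have my: "real m * y = real m / real n * M1"
    by (simp add: y_def)
  have "real m * M2 \<le> real m * (K * M1 / 2)"
    using M by (intro mult_left_mono) auto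
  also have "\<dots> \<le> K * ln (real n) * real n / 2"
    using Lm K npos mult_left_mono[of "real m / real n * M1" "ln (real n)" K]
    by (simp add: M0_M1_M2_def field_simps)
  finally have mM2: "2 * real m * (2 * M2 / (real n)^2) \<le> 2 * K * ln (real n) / real n"
    using npos by (simp add: field_simps power2_eq_square)
  have "0 < 1 - moment n f 1 / real n"
    using y unfolding y_def M0_M1_M2_def by linarith
  then have "prob_connected n m f
      \<le> 1 / (real n * (1 - y) ^ m) + (1 - 2 * y + 2 * M2 / (real n)^2) ^ m / (1 - y) ^ (2 * m) - 1"
    using prob_connected_le_isolated_bound[OF dist n2] by (simp add: y_def M0_M1_M2_def)
  also have "1 / (real n * (1 - y) ^ m)
      \<le> exp (- (ln (real n) - real m / real n * M1) + K * ln (real n) / real n)"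
    using inverse_expected_isolated_le[OF y yK, where m = m, unfolded my] n2 Lm
    by (simp add: M0_M1_M2_def)
  also have "(1 - 2 * y + 2 * M2 / (real n)^2) ^ m / (1 - y) ^ (2 * m)
      \<le> exp (2 * K * ln (real n) / real n)"
    using pair_ratio_le_exp[OF y, of "2 * M2 / (real n)^2" m] M mM2
    by (meson divide_nonneg_nonneg exp_le_cancel_iff mult_nonneg_nonneg order_trans
        zero_le_numeral zero_le_power2)
  finally show ?thesis
    by (simp add: M0_M1_M2_def)
qed

lemma small_cut_exponent_le:
  fixes l L D t :: real
  assumes "0 < l" "l \<le> L" "0 \<le> D" "2 * D \<le> l" "0 \<le> t" "t \<le> 1 / l"
  shows "l - L * (1 - D * t) \<le> D + (l - L) / 2"
proof -
  have "L * D * t \<le> L * D * (1 / l)"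
    using assms by (intro mult_left_mono) auto
  also have "\<dots> = D + (L - l) * (D / l)"
    using assms by (simp add: field_simps)
  also have "\<dots> \<le> D + (L - l) * (1 / 2)"
    using assms by (intro add_left_mono mult_left_mono) (auto simp: divide_simps)
  finally show ?thesis
    by (simp add: field_simps)
qed

text \<open>For a cut of size \<open>k \<le> n / ln n\<close> the binomial coefficient is at most \<open>n\<^sup>k\<close>, and the
  quadratic estimate loses only a constant factor per node.\<close>
lemma small_cut_term_le:
  fixes M0 M1 M2 D :: real
  assumes "1 < n" "k \<le> n" "real k * ln (real n) \<le> real n"
    and D: "0 \<le> D" "2 * D \<le> ln (real n)" "M0 + M2 / 2 \<le> D * M1"
    and L: "ln (real n) \<le> real m / real n * M1"
  shows "real (n choose k) * exp (- (real m * (real k / real n * M1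
           - (real k / real n)^2 * (M0 + M2 / 2))))
         \<le> exp (D + (ln (real n) - real m / real n * M1) / 2) ^ k"
proof -
  define t L where "t = real k / real n" "L = real m / real n * M1"
  have ln_n: "0 < ln (real n)"
    using \<open>1 < n\<close> by simp
  have "real m * (t^2 * (M0 + M2 / 2)) \<le> real m * (t^2 * (D * M1))"
    using D by (intro mult_left_mono) auto
  then have exponent: "real k * (L * (1 - D * t)) \<le> real m * (t * M1 - t^2 * (M0 + M2 / 2))"
    using \<open>1 < n\<close> by (simp add: t_L_def power2_eq_square field_simps)
  have "t \<le> 1 / ln (real n)"
    using assms ln_n by (simp add: t_L_def field_simps)
  then have "ln (real n) - L * (1 - D * t) \<le> D + (ln (real n) - L) / 2"
    using ln_n L D by (intro small_cut_exponent_le) (auto simp: t_L_def)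
  then have key: "real k * (ln (real n) - L * (1 - D * t)) \<le> real k * (D + (ln (real n) - L) / 2)"
    by (rule mult_left_mono) simp
  have "real (n choose k) \<le> exp (real k * ln (real n))"
    using binomial_le_pow[OF \<open>k \<le> n\<close>] \<open>1 < n\<close> by (simp add: exp_of_nat_mult)
  then have "real (n choose k) * exp (- (real m * (t * M1 - t^2 * (M0 + M2 / 2))))
      \<le> exp (real k * ln (real n)) * exp (- (real k * (L * (1 - D * t))))"
    using exponent by (intro mult_mono) auto
  also have "\<dots> = exp (real k * (ln (real n) - L * (1 - D * t)))"
    by (simp add: right_diff_distrib flip: exp_add)
  also have "\<dots> \<le> exp (real k * (D + (ln (real n) - L) / 2))"
    using key by simp
  finally show ?thesis
    by (simp add: t_L_def exp_of_nat_mult)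
qed

text \<open>For a cut of size \<open>k > n / ln n\<close> we use \<open>binom n k \<le> (e n / k)\<^sup>k \<le> (e ln n)\<^sup>k\<close> against the
  linear estimate.\<close>
lemma large_cut_term_le:
  fixes M0 M1 K :: real
  assumes "1 \<le> k" "real n < real k * ln (real n)" "0 < K" "2 * M1 \<le> K * M0"
    and L: "ln (real n) \<le> real m / real n * M1"
  shows "real (n choose k) * exp (- (real m * (real k / real n * M0)))
         \<le> (exp 1 * ln (real n) * exp (- 2 * ln (real n) / K)) ^ k"
proof -
  have "real n / real k \<le> ln (real n)"
    using assms by (simp add: divide_simps mult.commute)
  then have "exp 1 * real n / real k \<le> exp 1 * ln (real n)"
    by (simp add: mult_left_mono flip: times_divide_eq_right)
  then have "real (n choose k) \<le> (exp 1 * ln (real n)) ^ k"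
    using binomial_le_exp_ratio_power[OF \<open>1 \<le> k\<close>, of n] power_mono[of _ _ k]
    by (meson divide_nonneg_nonneg exp_ge_zero mult_nonneg_nonneg of_nat_0_le_iff order_trans)
  moreover have "real k * (2 * ln (real n) / K) \<le> real m * (real k / real n * M0)"
  proof -
    have "2 * ln (real n) / K \<le> 2 * (real m / real n * M1) / K"
      using L \<open>0 < K\<close> by (intro divide_right_mono) auto
    also have "\<dots> \<le> real m / real n * M0"
    proof -
      have "real m / real n * (2 * M1) \<le> real m / real n * (K * M0)"
        using assms by (intro mult_left_mono) simp_all
      then show ?thesis
        by (simp only: pos_divide_le_eq[OF \<open>0 < K\<close>]) (simp add: ac_simps)
    qed
    finally have "real k * (2 * ln (real n) / K) \<le> real k * (real m / real n * M0)"
      by (rule mult_left_mono) simp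
    then show ?thesis
      by (simp add: algebra_simps)
  qed
  then have "exp (- (real m * (real k / real n * M0))) \<le> exp (- 2 * ln (real n) / K) ^ k"
    by (simp add: exp_of_nat_mult[symmetric])
  ultimately show ?thesis
    by (simp add: power_mult_distrib mult_mono)
qed

lemma cut_term_le:
  fixes M0 M1 M2 K :: real
  assumes "1 < n" and k: "k \<in> {1..n div 2}" and K: "0 < K"
    and MK: "2 * M1 \<le> K * M0" and MD: "M0 + M2 / 2 \<le> (1/2 + K/4) * M1"
    and L: "ln (real n) \<le> real m / real n * M1" and D: "2 * (1/2 + K/4) \<le> ln (real n)"
  shows "real (n choose k) * min (exp (- (real m * (real k / real n * M1
            - (real k / real n)^2 * (M0 + M2 / 2))))) (exp (- (real m * (real k / real n * M0))))
         \<le> exp ((1/2 + K/4) + (ln (real n) - real m / real n * M1) / 2) ^ k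
           + (exp 1 * ln (real n) * exp (- 2 * ln (real n) / K)) ^ k"
proof (cases "real k * ln (real n) \<le> real n")
  case True
  have "k \<le> n"
    using k div_le_dividend[of n 2] by (meson atLeastAtMost_iff order_trans)
  with True have "real (n choose k) * exp (- (real m * (real k / real n * M1
      - (real k / real n)^2 * (M0 + M2 / 2))))
      \<le> exp ((1/2 + K/4) + (ln (real n) - real m / real n * M1) / 2) ^ k"
    using small_cut_term_le[OF \<open>1 < n\<close> _ True _ D MD L] K by simp
  moreover have "0 \<le> (exp 1 * ln (real n) * exp (- 2 * ln (real n) / K)) ^ k"
    using \<open>1 < n\<close> by simp
  ultimately show ?thesis
    by (meson add_increasing2 min.cobounded1 mult_left_mono of_nat_0_le_iff order_trans)
next
  case False
  then have "real (n choose k) * exp (- (real m * (real k / real n * M0)))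
      \<le> (exp 1 * ln (real n) * exp (- 2 * ln (real n) / K)) ^ k"
    using large_cut_term_le[OF _ _ K MK L] k by simp
  moreover have "0 \<le> exp ((1/2 + K/4) + (ln (real n) - real m / real n * M1) / 2) ^ k"
    by simp
  ultimately show ?thesis
    by (meson add_increasing min.cobounded2 mult_left_mono of_nat_0_le_iff order_trans)
qed

lemma one_minus_prob_connected_le_exp:
  fixes n m :: nat and f :: "nat \<Rightarrow> real" and K :: real
  defines "r \<equiv> exp ((1/2 + K/4) + (ln (real n) - real m / real n * moment n f 1) / 2)"
    and "s \<equiv> exp 1 * ln (real n) * exp (- 2 * ln (real n) / K)"
  assumes dist: "is_size_dist n f" and "1 < n" and K: "0 < K"
    and mk: "moment n f 2 \<le> K * moment n f 0"
    and L: "ln (real n) \<le> real m / real n * moment n f 1"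
    and D: "2 * (1/2 + K/4) \<le> ln (real n)"
    and small: "r \<le> 1/2" "s \<le> 1/2"
  shows "1 - prob_connected n m f \<le> 2 * r + 2 * s"
proof -
  have MK: "2 * moment n f 1 \<le> K * moment n f 0" and "2 * moment n f 2 \<le> K * moment n f 1"
    using moment_ratio_bounds[OF dist _ mk] K by simp_all
  moreover have "moment n f 0 \<le> moment n f 1 / 2"
    using moment_le_half_moment_Suc[OF dist, of 0] by simp
  ultimately have MD: "moment n f 0 + moment n f 2 / 2 \<le> (1/2 + K/4) * moment n f 1"
    by (simp add: algebra_simps)
  have rs: "0 \<le> r" "0 \<le> s"
    using \<open>1 < n\<close> by (simp_all add: r_def s_def)
  have "1 - prob_connected n m f \<le> (\<Sum>k=1..n div 2. r ^ k + s ^ k)"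
    using one_minus_prob_connected_le_cut_bound[OF dist]
      sum_mono[OF cut_term_le[OF \<open>1 < n\<close> _ K MK MD L D]]
    unfolding r_def s_def by (rule order_trans)
  also have "\<dots> \<le> 2 * r + 2 * s"
    unfolding sum.distrib by (intro add_mono sum_power_le_twice rs small)
  finally show ?thesis .
qed


section \<open>The threshold\<close>

lemma prob_connected_tendsto_0:
  fixes m :: "nat \<Rightarrow> nat" and f :: "nat \<Rightarrow> nat \<Rightarrow> real"
  defines "\<omega> \<equiv> \<lambda>n. ln (real n) - real (m n) / real n * moment n (f n) 1"
  assumes dist: "\<And>n. is_size_dist n (f n)" and K: "0 \<le> K"
    and mk: "\<forall>\<^sub>F n in sequentially. moment n (f n) 2 \<le> K * moment n (f n) 0"
    and \<omega>: "filterlim \<omega> at_top sequentially"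
  shows "(\<lambda>n. prob_connected n (m n) (f n)) \<longlonglongrightarrow> 0"
proof (rule tendsto_sandwich)
  have ln_n: "((\<lambda>n. ln (real n) / real n) \<longlongrightarrow> 0) sequentially"
    by real_asymp
  show "\<forall>\<^sub>F n in sequentially. 0 \<le> prob_connected n (m n) (f n)"
    using prob_connected_nonneg[OF dist] by simp
  show "\<forall>\<^sub>F n in sequentially. prob_connected n (m n) (f n)
      \<le> exp (- \<omega> n + K * (ln (real n) / real n)) + (exp (2 * K * (ln (real n) / real n)) - 1)"
  proof -
    have "\<forall>\<^sub>F n in sequentially. 0 \<le> \<omega> n"
      using \<omega> unfolding filterlim_at_top by blast
    moreover have "\<forall>\<^sub>F n in sequentially. max 2 (2 * K) \<le> real n"
      by real_asymp
    ultimately show ?thesis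
      using mk
    proof eventually_elim
      case (elim n)
      then have "2 \<le> n" "2 * K \<le> real n" "real (m n) / real n * moment n (f n) 1 \<le> ln (real n)"
        by (simp_all add: \<omega>_def)
      from prob_connected_le_exp[OF dist this(1) K this(2) elim(3) this(3)]
      show ?case
        by (simp add: \<omega>_def)
    qed
  qed
  have "filterlim (\<lambda>n. - \<omega> n + K * (ln (real n) / real n)) at_bot sequentially"
    unfolding filterlim_uminus_at_bot
    using filterlim_tendsto_add_at_top[OF tendsto_mult_right_zero[OF ln_n, of K, THEN tendsto_minus] \<omega>]
    by (simp add: add.commute)
  then have "((\<lambda>n. exp (- \<omega> n + K * (ln (real n) / real n))) \<longlongrightarrow> 0) sequentially"
    by (rule filterlim_compose[OF exp_at_bot])
  moreover have "((\<lambda>n. exp (2 * K * (ln (real n) / real n)) - 1) \<longlongrightarrow> exp (2 * K * 0) - 1) sequentially"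
    by (intro tendsto_intros ln_n)
  ultimately show "((\<lambda>n. exp (- \<omega> n + K * (ln (real n) / real n))
      + (exp (2 * K * (ln (real n) / real n)) - 1)) \<longlongrightarrow> 0) sequentially"
    using tendsto_add by force
qed (rule tendsto_const)

lemma prob_connected_tendsto_1:
  fixes m :: "nat \<Rightarrow> nat" and f :: "nat \<Rightarrow> nat \<Rightarrow> real"
  defines "\<omega> \<equiv> \<lambda>n. ln (real n) - real (m n) / real n * moment n (f n) 1"
  assumes dist: "\<And>n. is_size_dist n (f n)" and K: "0 < K"
    and mk: "\<forall>\<^sub>F n in sequentially. moment n (f n) 2 \<le> K * moment n (f n) 0"
    and \<omega>: "filterlim \<omega> at_bot sequentially"
  shows "(\<lambda>n. prob_connected n (m n) (f n)) \<longlonglongrightarrow> 1"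
proof -
  define r where "r n = exp ((1/2 + K/4) + \<omega> n / 2)" for n
  define s where "s n = exp 1 * ln (real n) * exp (- 2 * ln (real n) / K)" for n
  have "filterlim (\<lambda>n. \<omega> n / 2) at_bot sequentially"
    using filterlim_tendsto_pos_mult_at_bot_iff[of "\<lambda>_. 1/2" "1/2" sequentially \<omega>] \<omega> by simp
  then have "filterlim (\<lambda>n. (1/2 + K/4) + \<omega> n / 2) at_bot sequentially"
    by (subst filterlim_tendsto_add_at_bot_iff[OF tendsto_const])
  then have r: "r \<longlonglongrightarrow> 0"
    unfolding r_def by (rule filterlim_compose[OF exp_at_bot])
  have s: "s \<longlonglongrightarrow> 0"
    unfolding s_def using K by real_asymp
  have upper: "\<forall>\<^sub>F n in sequentially. 1 - prob_connected n (m n) (f n) \<le> 2 * r n + 2 * s n"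
  proof -
    have "\<forall>\<^sub>F n in sequentially. \<omega> n \<le> 0"
      using \<omega> unfolding filterlim_at_bot by blast
    moreover have "\<forall>\<^sub>F n in sequentially. 2 \<le> n"
      by (rule eventually_ge_at_top)
    moreover have "filterlim (\<lambda>n. ln (real n)) at_top sequentially"
      by real_asymp
    then have "\<forall>\<^sub>F n in sequentially. 2 * (1/2 + K/4) \<le> ln (real n)"
      unfolding filterlim_at_top by blast
    moreover have "\<forall>\<^sub>F n in sequentially. r n \<le> 1/2 \<and> s n \<le> 1/2"
      using order_tendstoD(2)[OF r, of "1/2"] order_tendstoD(2)[OF s, of "1/2"]
      by (auto elim: eventually_mono[OF eventually_conj])
    ultimately show ?thesis
      using mk
    proof eventually_elim
      case (elim n)
      have "ln (real n) \<le> real (m n) / real n * moment n (f n) 1" "1 < n"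
        using elim(1,2) by (simp_all add: \<omega>_def)
      from one_minus_prob_connected_le_exp[OF dist this(2) K elim(5) this(1) elim(3)] elim(4)
      show ?case
        unfolding r_def s_def \<omega>_def by blast
    qed
  qed
  have "((\<lambda>n. 2 * r n + 2 * s n) \<longlongrightarrow> 2 * 0 + 2 * 0) sequentially"
    by (intro tendsto_intros r s)
  then have "((\<lambda>n. 1 - prob_connected n (m n) (f n)) \<longlongrightarrow> 0) sequentially"
    using prob_connected_le_1[OF dist] by (intro tendsto_sandwich[OF _ upper tendsto_const]) simp_all
  then show ?thesis
    using tendsto_diff[OF tendsto_const[of 1], of "\<lambda>n. 1 - prob_connected n (m n) (f n)" 0] by simp
qed

theorem mainTheorem3:
  fixes m :: "nat \<Rightarrow> nat" and f :: "nat \<Rightarrow> nat \<Rightarrow> real"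
  assumes m_pos: "\<And>n. m n \<ge> 1"
    and dist: "\<And>n. is_size_dist n (f n)"
    and mom: "\<exists>C. \<forall>\<^sub>F n in sequentially. moment n (f n) 2 \<le> C * \<bar>moment n (f n) 0\<bar>"
  shows "(filterlim (\<lambda>n. ln (real n) - real (m n) / real n * moment n (f n) 1) at_top sequentially
            \<longrightarrow> (\<lambda>n. prob_connected n (m n) (f n)) \<longlonglongrightarrow> 0)
       \<and> (filterlim (\<lambda>n. ln (real n) - real (m n) / real n * moment n (f n) 1) at_bot sequentially
            \<longrightarrow> (\<lambda>n. prob_connected n (m n) (f n)) \<longlonglongrightarrow> 1)"
proof -
  obtain C where C: "\<forall>\<^sub>F n in sequentially. moment n (f n) 2 \<le> C * \<bar>moment n (f n) 0\<bar>"
    using mom by blast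
  have K: "\<forall>\<^sub>F n in sequentially. moment n (f n) 2 \<le> max C 1 * moment n (f n) 0"
    using C
  proof eventually_elim
    case (elim n)
    then show ?case
      using moment_nonneg[OF dist, of n 0] mult_right_mono[of C "max C 1" "moment n (f n) 0"]
      by simp
  qed
  show ?thesis
    using prob_connected_tendsto_0[OF dist _ K] prob_connected_tendsto_1[OF dist _ K] by simp
qed

end
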